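(* No randomized (adaptive) priority algorithm for one-sided bipartite matching can achieve an approximation ratio better than $\frac{53}{54}$.
   Context: One-sided bipartite matching: the offline side's vertex names are known in advance; each online vertex corresponds to a data item consisting of its name together with its set of offline neighbours; when a data item is received the algorithm must irrevocably match that online vertex to an unmatched neighbour or leave it unmatched; the goal is a maximum-size matching. Adaptive priority model: before each step the algorithm specifies a total ordering $\pi$ of the universe of all possible data items (which may depend on previously received data items and decisions), and receives the remaining data item of the instance that comes first in $\pi$, then decides. A randomized priority algorithm may in addition use random bits in its orderings and decisions; its approximation ratio is $\inf_I \mathbb{E}[v(\mathbb{A},I)]/v(I)$, with $v(I)$ the maximum matching size. *)

theory Defs
  imports "HOL-Probability.Probability"
begin

text \<open>Vertex names are natural numbers (offline and online names live on
different sides, so reusing nat for both is harmless).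
A data item is a pair (online name, set of offline neighbours).\<close>

type_synonym item = "nat \<times> nat set"

text \<open>A history: the data items received so far with the decision taken
(None = left unmatched, Some u = matched to offline vertex u).\<close>

type_synonym hist = "(item \<times> nat option) list"

text \<open>A deterministic adaptive priority algorithm. Given the (known in
advance) set of offline vertices and the history, it specifies an ordering
(a relation on the universe of data items); given in addition the received
data item it makes a decision.\<close>

record palg =
  ord :: "nat set \<Rightarrow> hist \<Rightarrow> item rel"
  dec :: "nat set \<Rightarrow> hist \<Rightarrow> item \<Rightarrow> nat option"

definition wf_alg :: "palg \<Rightarrow> bool" where
  "wf_alg A \<longleftrightarrow> (\<forall>U h. linear_order_on UNIV (ord A U h))"

definition matched :: "hist \<Rightarrow> nat set" where
  "matched h = {u. \<exists>x. (x, Some u) \<in> set h}"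

definition first_in :: "item rel \<Rightarrow> item set \<Rightarrow> item" where
  "first_in p R = (THE x. x \<in> R \<and> (\<forall>y\<in>R. (x, y) \<in> p))"

text \<open>Effective decision: a decision that is not a currently unmatched
neighbour is treated as leaving the online vertex unmatched (matches are
thus always legal).\<close>

definition legal_dec :: "hist \<Rightarrow> item \<Rightarrow> nat option \<Rightarrow> nat option" where
  "legal_dec h x d = (case d of None \<Rightarrow> None
     | Some u \<Rightarrow> (if u \<in> snd x \<and> u \<notin> matched h then Some u else None))"

text \<open>Execution of an algorithm on offline set U, remaining data items R,
current history h; the fuel argument is the number of remaining steps.\<close>

fun run :: "palg \<Rightarrow> nat set \<Rightarrow> nat \<Rightarrow> item set \<Rightarrow> hist \<Rightarrow> hist" where
  "run A U 0 R h = h"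
| "run A U (Suc n) R h =
     (if R = {} then h else
       (let x = first_in (ord A U h) R;
            d = legal_dec h x (dec A U h x)
        in run A U n (R - {x}) (h @ [(x, d)])))"

definition alg_value :: "palg \<Rightarrow> nat set \<Rightarrow> item set \<Rightarrow> nat" where
  "alg_value A U D = length (filter (\<lambda>(x, d). d \<noteq> None) (run A U (card D) D []))"

definition is_instance :: "nat set \<Rightarrow> item set \<Rightarrow> bool" where
  "is_instance U D \<longleftrightarrow> finite U \<and> finite D \<and> inj_on fst D \<and> (\<forall>x\<in>D. snd x \<subseteq> U)"

definition edges :: "item set \<Rightarrow> (nat \<times> nat) set" where
  "edges D = {(v, u). \<exists>N. (v, N) \<in> D \<and> u \<in> N}"

definition is_matching :: "(nat \<times> nat) set \<Rightarrow> bool" where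
  "is_matching M \<longleftrightarrow> (\<forall>e\<in>M. \<forall>e'\<in>M. fst e = fst e' \<longleftrightarrow> snd e = snd e')"

definition opt :: "item set \<Rightarrow> nat" where
  "opt D = Max {card M | M. M \<subseteq> edges D \<and> is_matching M}"

text \<open>A randomized priority algorithm: a probability space M of random
choices and, for each outcome, a deterministic priority algorithm.\<close>

definition exp_value :: "'w measure \<Rightarrow> ('w \<Rightarrow> palg) \<Rightarrow> nat set \<Rightarrow> item set \<Rightarrow> real" where
  "exp_value M A U D = integral\<^sup>L M (\<lambda>w. real (alg_value (A w) U D))"

definition approx_ratio :: "'w measure \<Rightarrow> ('w \<Rightarrow> palg) \<Rightarrow> real" where
  "approx_ratio M A = (INF I \<in> {(U, D). is_instance U D \<and> opt D > 0}.
       exp_value M A (fst I) (snd I) / real (opt (snd I)))"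

definition randomized_priority_alg :: "'w measure \<Rightarrow> ('w \<Rightarrow> palg) \<Rightarrow> bool" where
  "randomized_priority_alg M A \<longleftrightarrow> prob_space M \<and> (\<forall>w\<in>space M. wf_alg (A w))
     \<and> (\<forall>U D. is_instance U D \<longrightarrow> (\<lambda>w. real (alg_value (A w) U D)) \<in> borel_measurable M)"

end

theory Submission
  imports Defs
begin

text \<open>By Yao's principle it suffices to find a finite family of instances on which every
deterministic algorithm does badly on average. Take the offline vertices 1, 2, 3 and, for an
online vertex n and a permutation (p, q, r) of the offline vertices, the instance where n has
neighbours {p, q} and the two other online vertices both have neighbours {q, r}; its maximum
matching has size 3. All data items of all 18 such instances lie in a finite set, so a
deterministic algorithm first receives its favourite item (n, {a, b}) of that set on every
instance containing it. Whatever it does with n, it fails on one of the two instances with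
{p, q} = {a, b}: with q the vertex to which n is not matched, afterwards only q and r can be
matched. So the 18 values sum to at most 17 * 3 + 2 = 53, some instance has expected value at
most 53/18, and the ratio there is at most 53/54.\<close>

lemma linear_order_on_UNIV_least:
  assumes lin: "linear_order_on UNIV p" and "finite R" "R \<noteq> {}"
  obtains x where "x \<in> R" "\<forall>y\<in>R. (x, y) \<in> p"
proof -
  have "wf (Restr p R - Id)"
    using assms(2) linear_order_on_acyclic[OF lin]
    by (intro finite_acyclic_wf) (auto intro: acyclic_subset)
  then obtain x where x: "x \<in> R" "\<And>y. (y, x) \<in> Restr p R - Id \<Longrightarrow> y \<notin> R"
    using assms(3) by (metis ex_in_conv wfE_min)
  have "(x, y) \<in> p" if "y \<in> R" for y
  proof (cases "y = x")
    case True
    then show ?thesis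
      using lin by (simp add: linear_order_on_def partial_order_on_def preorder_on_def refl_on_def)
  next
    case False
    then have "(y, x) \<notin> p" using x that by blast
    then show ?thesis using lin False unfolding linear_order_on_def total_on_def by blast
  qed
  with x show thesis using that by blast
qed

lemma first_in_eqI:
  assumes "antisym p" "x \<in> R" "\<forall>y\<in>R. (x, y) \<in> p"
  shows "first_in p R = x"
  unfolding first_in_def using assms by (blast intro: the_equality dest: antisymD)

lemma first_in_mem:
  assumes "linear_order_on UNIV p" "finite R" "R \<noteq> {}"
  shows "first_in p R \<in> R"
proof -
  obtain x where "x \<in> R" "\<forall>y\<in>R. (x, y) \<in> p"
    using linear_order_on_UNIV_least[OF assms] .
  moreover have "antisym p" using assms(1) by (simp add: linear_order_on_def partial_order_on_def)
  ultimately show ?thesis using first_in_eqI by metis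
qed

lemma matched_eq_set_map_filter: "matched h = set (List.map_filter snd h)"
  unfolding matched_def List.map_filter_def by force

lemma matched_snoc: "matched (h @ [(x, d)]) = matched h \<union> set_option d"
  unfolding matched_def by (cases x) auto

lemma legal_dec_subset: "set_option (legal_dec h x d) \<subseteq> snd x - matched h"
  unfolding legal_dec_def by (auto split: option.splits)

lemma distinct_map_filter_snd_run:
  "distinct (List.map_filter snd h) \<Longrightarrow> distinct (List.map_filter snd (run B U n R h))"
proof (induction n arbitrary: R h)
  case (Suc n)
  show ?case
  proof (cases "R = {}")
    case False
    define x where "x = first_in (ord B U h) R"
    define d where "d = legal_dec h x (dec B U h x)"
    have "set_option d \<inter> set (List.map_filter snd h) = {}"
      using legal_dec_subset[of h x] by (auto simp: d_def matched_eq_set_map_filter)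
    then have "distinct (List.map_filter snd (h @ [(x, d)]))"
      using Suc.prems by (cases d) (auto simp: List.map_filter_def)
    then show ?thesis
      using Suc.IH False by (simp add: x_def d_def Let_def)
  qed (use Suc.prems in simp)
qed simp

lemma matched_run_subset:
  assumes "wf_alg B" and "finite R"
  shows "matched (run B U n R h) \<subseteq> matched h \<union> \<Union>(snd ` R)"
  using assms(2)
proof (induction n arbitrary: R h)
  case (Suc n)
  show ?case
  proof (cases "R = {}")
    case False
    define x where "x = first_in (ord B U h) R"
    define d where "d = legal_dec h x (dec B U h x)"
    have "x \<in> R"
      using first_in_mem assms(1) Suc.prems False by (auto simp: x_def wf_alg_def)
    moreover have "set_option d \<subseteq> snd x"
      using legal_dec_subset[of h x] by (auto simp: d_def)
    moreover have "matched (run B U n (R - {x}) (h @ [(x, d)]))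
        \<subseteq> matched h \<union> set_option d \<union> \<Union>(snd ` (R - {x}))"
      using Suc.IH[of "R - {x}" "h @ [(x, d)]"] Suc.prems by (simp add: matched_snoc)
    ultimately show ?thesis
      using False by (auto simp: x_def d_def Let_def)
  qed simp
qed simp

lemma length_filter_decided:
  "length (filter (\<lambda>(x, d). d \<noteq> None) h) = length (List.map_filter snd h)"
  by (induction h) (auto split: option.split)

lemma alg_value_eq_card_matched:
  "alg_value B U D = card (matched (run B U (card D) D []))"
proof -
  let ?h = "run B U (card D) D []"
  have "distinct (List.map_filter snd ?h)"
    by (rule distinct_map_filter_snd_run) (simp add: List.map_filter_def)
  then show ?thesis
    unfolding alg_value_def length_filter_decided matched_eq_set_map_filter
    by (simp add: distinct_card)
qed

lemma alg_value_le_card_offline: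
  assumes "wf_alg B" and "is_instance U D"
  shows "alg_value B U D \<le> card U"
proof -
  have "matched (run B U (card D) D []) \<subseteq> U"
    using matched_run_subset[OF assms(1), of D U "card D" "[]"] assms(2)
    by (auto simp: is_instance_def matched_def)
  then show ?thesis
    using assms(2) by (simp add: alg_value_eq_card_matched is_instance_def card_mono)
qed

lemma alg_value_le_card_after_first:
  assumes "wf_alg B" and "finite D" and "y \<in> D" and least: "\<forall>z\<in>D. (y, z) \<in> ord B U []"
    and "finite S"
    and S: "set_option (legal_dec [] y (dec B U [] y)) \<union> \<Union>(snd ` (D - {y})) \<subseteq> S"
  shows "alg_value B U D \<le> card S"
proof -
  let ?d = "legal_dec [] y (dec B U [] y)"
  have "antisym (ord B U [])"
    using assms(1) by (simp add: wf_alg_def linear_order_on_def partial_order_on_def)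
  then have first: "first_in (ord B U []) D = y"
    using first_in_eqI assms(3) least by blast
  obtain k where k: "card D = Suc k"
    using assms(2,3) by (metis card_0_eq empty_iff not0_implies_Suc)
  have "run B U (card D) D [] = run B U k (D - {y}) [(y, ?d)]"
    using assms(3) first by (auto simp: k Let_def)
  moreover have "matched [(y, ?d)] = set_option ?d"
    by (auto simp: matched_def)
  ultimately have "matched (run B U (card D) D []) \<subseteq> set_option ?d \<union> \<Union>(snd ` (D - {y}))"
    using matched_run_subset[OF assms(1), of "D - {y}" U k "[(y, ?d)]"] assms(2) by simp
  with S have "matched (run B U (card D) D []) \<subseteq> S"
    by blast
  then show ?thesis
    using assms(5) by (simp add: alg_value_eq_card_matched card_mono)
qed

lemma finite_edges:
  assumes "is_instance U D"
  shows "finite (edges D)"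
proof (rule finite_subset)
  show "edges D \<subseteq> fst ` D \<times> U"
  proof
    fix e assume "e \<in> edges D"
    then obtain v u N where "e = (v, u)" "(v, N) \<in> D" "u \<in> N"
      unfolding edges_def by blast
    then show "e \<in> fst ` D \<times> U"
      using assms unfolding is_instance_def by force
  qed
  show "finite (fst ` D \<times> U)"
    using assms by (simp add: is_instance_def)
qed

lemma card_le_opt:
  assumes "finite (edges D)" and "M \<subseteq> edges D" and "is_matching M"
  shows "card M \<le> opt D"
proof -
  have "{card M | M. M \<subseteq> edges D \<and> is_matching M} \<subseteq> card ` Pow (edges D)"
    by auto
  then have "finite {card M | M. M \<subseteq> edges D \<and> is_matching M}"
    by (rule finite_subset) (simp add: assms(1))
  then show ?thesis
    unfolding opt_def using assms(2,3) by (auto intro: Max_ge)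
qed

lemma approx_ratio_le:
  assumes "is_instance U D" and "0 < opt D"
  shows "approx_ratio M A \<le> exp_value M A U D / opt D"
proof -
  let ?I = "{(U, D). is_instance U D \<and> opt D > 0}"
  have "bdd_below ((\<lambda>I. exp_value M A (fst I) (snd I) / opt (snd I)) ` ?I)"
    by (rule bdd_belowI[where m = 0]) (auto simp: exp_value_def)
  moreover have "(U, D) \<in> ?I" using assms by simp
  ultimately show ?thesis
    unfolding approx_ratio_def by (metis (no_types, lifting) cINF_lower fst_conv snd_conv)
qed

lemma ex_le_average:
  fixes f :: "'a \<Rightarrow> real"
  assumes "finite J" and "J \<noteq> {}" and "sum f J \<le> s"
  shows "\<exists>j\<in>J. f j \<le> s / card J"
proof (rule ccontr)
  assume "\<not> ?thesis"
  then have "(\<Sum>j\<in>J. s / card J) < sum f J"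
    using assms(1,2) by (intro sum_strict_mono) auto
  then show False using assms by simp
qed

text \<open>Yao's principle, in the form of an averaging argument over a finite family of instances.\<close>

lemma approx_ratio_le_average:
  assumes rand: "randomized_priority_alg M A" and "finite J" and "J \<noteq> {}" and "0 < c"
    and inst: "\<And>j. j \<in> J \<Longrightarrow> is_instance (U j) (D j) \<and> c \<le> opt (D j)"
    and det: "\<And>B. wf_alg B \<Longrightarrow> (\<Sum>j\<in>J. alg_value B (U j) (D j)) \<le> s"
  shows "approx_ratio M A \<le> s / (card J * c)"
proof -
  interpret prob_space M using rand by (simp add: randomized_priority_alg_def)
  have wf: "\<And>w. w \<in> space M \<Longrightarrow> wf_alg (A w)"
    using rand by (simp add: randomized_priority_alg_def)
  have int: "integrable M (\<lambda>w. real (alg_value (A w) (U j) (D j)))" if "j \<in> J" for j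
  proof (rule integrable_const_bound[where B = "card (U j)"])
    show "AE w in M. norm (real (alg_value (A w) (U j) (D j))) \<le> card (U j)"
      using alg_value_le_card_offline wf inst[OF that] by auto
    show "(\<lambda>w. real (alg_value (A w) (U j) (D j))) \<in> borel_measurable M"
      using rand inst[OF that] by (simp add: randomized_priority_alg_def)
  qed
  have sum_le: "(\<Sum>j\<in>J. real (alg_value (A w) (U j) (D j))) \<le> s" if "w \<in> space M" for w
    using det[OF wf[OF that]] by (metis of_nat_le_iff of_nat_sum)
  have "(\<Sum>j\<in>J. exp_value M A (U j) (D j))
      = integral\<^sup>L M (\<lambda>w. \<Sum>j\<in>J. real (alg_value (A w) (U j) (D j)))"
    unfolding exp_value_def using int by (simp add: integral_sum)
  also have "\<dots> \<le> s"
    using int sum_le by (intro integral_le_const AE_I2) auto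
  finally obtain j where j: "j \<in> J" and "exp_value M A (U j) (D j) \<le> s / card J"
    using ex_le_average assms(2,3) by blast
  moreover have "0 \<le> s / card J" by simp
  ultimately have "exp_value M A (U j) (D j) / opt (D j) \<le> (s / card J) / c"
    using inst[OF j] assms(4) by (intro frac_le) auto
  then show ?thesis
    using approx_ratio_le[of "U j" "D j" M A] inst[OF j] assms(4) by simp
qed

definition hard_indices :: "(nat \<times> nat \<times> nat \<times> nat) set" where
  "hard_indices = {1, 2, 3} \<times> {(1, 2, 3), (1, 3, 2), (2, 1, 3), (2, 3, 1), (3, 1, 2), (3, 2, 1)}"

definition hard_instance :: "nat \<times> nat \<times> nat \<times> nat \<Rightarrow> item set" where
  "hard_instance = (\<lambda>(n, p, q, r). insert (n, {p, q}) ((\<lambda>m. (m, {q, r})) ` ({1, 2, 3} - {n})))"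

lemma card_hard_indices: "card hard_indices = 18"
  unfolding hard_indices_def by (simp add: card_cartesian_product)

lemma finite_hard_indices: "finite hard_indices"
  unfolding hard_indices_def by simp

lemma finite_hard_instance: "finite (hard_instance j)"
  by (cases j) (simp add: hard_instance_def)

lemma hard_indicesD:
  "(n, p, q, r) \<in> hard_indices \<Longrightarrow>
    n \<in> {1, 2, 3} \<and> {p, q, r} \<subseteq> {1, 2, 3} \<and> distinct [p, q, r]"
  unfolding hard_indices_def by (simp, elim disjE conjE, simp_all)

lemma hard_indices_swap: "(n, p, q, r) \<in> hard_indices \<Longrightarrow> (n, q, p, r) \<in> hard_indices"
  unfolding hard_indices_def by (simp, elim disjE conjE, simp_all)

lemma hard_indices_rotate:
  "(n, p, q, r) \<in> hard_indices \<Longrightarrow> m \<in> {1, 2, 3} \<Longrightarrow> (m, q, r, p) \<in> hard_indices"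
  unfolding hard_indices_def by (simp, elim disjE conjE, simp_all)

lemma is_instance_hard_instance:
  assumes "j \<in> hard_indices"
  shows "is_instance {1, 2, 3} (hard_instance j)"
proof (cases j)
  case (fields n p q r)
  then show ?thesis
    using hard_indicesD assms unfolding hard_instance_def is_instance_def by (auto simp: inj_on_def)
qed

lemma opt_hard_instance:
  assumes "j \<in> hard_indices"
  shows "3 \<le> opt (hard_instance j)"
proof (cases j)
  case (fields n p q r)
  with assms have "n = 1 \<or> n = 2 \<or> n = 3" and pqr: "distinct [p, q, r]"
    using hard_indicesD by auto
  then obtain a b where ab: "{1, 2, 3} - {n} = {a, b}" "distinct [n, a, b]"
    by (elim disjE) (rule that[of 2 3] that[of 1 3] that[of 1 2]; auto)+
  let ?M = "{(n, p), (a, q), (b, r)}"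
  have "?M \<subseteq> edges (hard_instance j)"
    using ab unfolding fields edges_def hard_instance_def by auto
  moreover have "is_matching ?M" and "card ?M = 3"
    using ab pqr unfolding is_matching_def by auto
  ultimately show ?thesis
    using card_le_opt finite_edges is_instance_hard_instance[OF assms] by metis
qed

lemma hard_instance_item:
  assumes j: "(n, p, q, r) \<in> hard_indices" and "x \<in> hard_instance (n, p, q, r)"
  obtains n' p' q' r' where "(n', p', q', r') \<in> hard_indices" and "x = (n', {p', q'})"
proof -
  from assms(2) consider "x = (n, {p, q})" | m where "m \<in> {1, 2, 3}" "x = (m, {q, r})"
    unfolding hard_instance_def by auto
  then show thesis
    using that j hard_indices_rotate by cases blast+
qed

lemma alg_value_hard_instance_le_2:
  assumes wf: "wf_alg B"
    and least: "\<forall>z\<in>hard_instance (n, p, q, r). ((n, {p, q}), z) \<in> ord B {1, 2, 3} []"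
    and not_p: "legal_dec [] (n, {p, q}) (dec B {1, 2, 3} [] (n, {p, q})) \<noteq> Some p"
  shows "alg_value B {1, 2, 3} (hard_instance (n, p, q, r)) \<le> 2"
proof -
  have "set_option (legal_dec [] (n, {p, q}) (dec B {1, 2, 3} [] (n, {p, q}))) \<subseteq> {q}"
    using legal_dec_subset[of "[]" "(n, {p, q})"] not_p by (auto simp: matched_def)
  moreover have "hard_instance (n, p, q, r) - {(n, {p, q})} \<subseteq> (\<lambda>m. (m, {q, r})) ` UNIV"
    unfolding hard_instance_def by auto
  then have "\<Union>(snd ` (hard_instance (n, p, q, r) - {(n, {p, q})})) \<subseteq> {q, r}"
    by auto
  moreover have "(n, {p, q}) \<in> hard_instance (n, p, q, r)"
    by (simp add: hard_instance_def)
  ultimately have "alg_value B {1, 2, 3} (hard_instance (n, p, q, r)) \<le> card {q, r}"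
    by (intro alg_value_le_card_after_first[OF wf finite_hard_instance _ least]) auto
  also have "\<dots> \<le> 2"
    by (simp add: card_insert_if)
  finally show ?thesis .
qed

lemma ex_hard_instance_alg_value_le_2:
  assumes wf: "wf_alg B"
  shows "\<exists>j\<in>hard_indices. alg_value B {1, 2, 3} (hard_instance j) \<le> 2"
proof -
  let ?Y = "\<Union>(hard_instance ` hard_indices)"
  have "(1, 1, 2, 3) \<in> hard_indices" by (simp add: hard_indices_def)
  then have "finite ?Y" "?Y \<noteq> {}"
    using finite_hard_indices finite_hard_instance by (auto simp: hard_instance_def)
  then obtain y where "y \<in> ?Y" and least: "\<forall>z\<in>?Y. (y, z) \<in> ord B {1, 2, 3} []"
    using linear_order_on_UNIV_least wf unfolding wf_alg_def by metis
  then obtain j where "j \<in> hard_indices" "y \<in> hard_instance j" by blast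
  then obtain n p q r where j: "(n, p, q, r) \<in> hard_indices" and y: "y = (n, {p, q})"
    using hard_instance_item by (cases j) metis
  have j': "(n, q, p, r) \<in> hard_indices" and "p \<noteq> q"
    using j hard_indices_swap hard_indicesD by auto
  have y': "y = (n, {q, p})"
    using y by (simp add: insert_commute)
  have least_pq: "\<forall>z\<in>hard_instance (n, p, q, r). ((n, {p, q}), z) \<in> ord B {1, 2, 3} []"
    using least j y by blast
  have least_qp: "\<forall>z\<in>hard_instance (n, q, p, r). ((n, {q, p}), z) \<in> ord B {1, 2, 3} []"
    using least j' y' by blast
  consider "legal_dec [] y (dec B {1, 2, 3} [] y) \<noteq> Some p"
    | "legal_dec [] y (dec B {1, 2, 3} [] y) \<noteq> Some q"
    using \<open>p \<noteq> q\<close> by (cases "legal_dec [] y (dec B {1, 2, 3} [] y) = Some p") auto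
  then show ?thesis
  proof cases
    case 1
    then show ?thesis
      using alg_value_hard_instance_le_2[OF wf least_pq] j y by blast
  next
    case 2
    then show ?thesis
      using alg_value_hard_instance_le_2[OF wf least_qp] j' y' by blast
  qed
qed

lemma sum_alg_value_hard_instances_le:
  assumes wf: "wf_alg B"
  shows "(\<Sum>j\<in>hard_indices. alg_value B {1, 2, 3} (hard_instance j)) \<le> 53"
proof -
  obtain j0 where j0: "j0 \<in> hard_indices" "alg_value B {1, 2, 3} (hard_instance j0) \<le> 2"
    using ex_hard_instance_alg_value_le_2[OF wf] by blast
  have "(\<Sum>j\<in>hard_indices - {j0}. alg_value B {1, 2, 3} (hard_instance j))
      \<le> card (hard_indices - {j0}) * 3"
  proof (rule sum_bounded_above[where 'a = nat, unfolded of_nat_id])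
    fix j assume "j \<in> hard_indices - {j0}"
    then show "alg_value B {1, 2, 3} (hard_instance j) \<le> 3"
      using alg_value_le_card_offline[OF wf is_instance_hard_instance] by fastforce
  qed
  moreover have "card (hard_indices - {j0}) = 17"
    using j0(1) card_hard_indices finite_hard_indices by simp
  ultimately show ?thesis
    using j0 finite_hard_indices by (simp add: sum.remove)
qed

theorem theorem8:
  fixes M :: "'w measure" and A :: "'w \<Rightarrow> palg"
  assumes "randomized_priority_alg M A"
  shows "approx_ratio M A \<le> 53 / 54"
proof -
  have "approx_ratio M A \<le> real 53 / real (card hard_indices * 3)"
  proof (rule approx_ratio_le_average[OF assms finite_hard_indices])
    show "hard_indices \<noteq> {}" by (simp add: hard_indices_def)
    show "is_instance {1, 2, 3} (hard_instance j) \<and> 3 \<le> opt (hard_instance j)"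
      if "j \<in> hard_indices" for j
      using is_instance_hard_instance[OF that] opt_hard_instance[OF that] by simp
  qed (use sum_alg_value_hard_instances_le in auto)
  then show ?thesis by (simp add: card_hard_indices)
qed

end
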